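(* Let $P.\phi$ be a DQBF with prefix $P=\forall x_1,\dots,x_n\,\exists y_1(D_1),\dots,y_k(D_k)$ and let $G_{\mathrm{syn}}$ be an admissible group w.r.t. $P$. Then for every $g\in G_{\mathrm{syn}}$ and every $s\in\mathcal S(P)$, $[P.g(\phi)]_s=[P.\phi]_{g(s)}$. In particular, $P.\phi$ is true if and only if $P.g(\phi)$ is true, and $s$ is a model of $P.g(\phi)$ if and only if $g(s)$ is a model of $P.\phi$.
   Context: $X=\{x_1,\dots,x_n\}$, $Y=\{y_1,\dots,y_k\}$ are finite disjoint sets of propositional variables; $\operatorname{BF}(V)$ is the set of propositional formulas over $V\subseteq X\cup Y$; $\mathcal A(V)$ the set of assignments $V\to\{\top,\bot\}$, $[\phi]_\sigma$ the truth value. The prefix has dependency sets $D_j\subseteq X$; $\phi\in\operatorname{BF}(X\cup Y)$. An interpretation is $s=(s_1,\dots,s_k)$ with $s_j:\{\top,\bot\}^{|D_j|}\to\{\top,\bot\}$; $\mathcal S(P)$ is the set of interpretations. For $\sigma\in\mathcal A(X)$, $\sigma_s\in\mathcal A(X\cup Y)$ equals $\sigma$ on $X$ and $\sigma_s(y_j)=s_j$ evaluated at $\sigma$'s values on $D_j$. $[P.\phi]_s=\bigwedge_{\sigma\in\mathcal A(X)}[\phi]_{\sigma_s}$; $P.\phi$ is true if some $s$ gives $\top$, and such $s$ is a model. For $g:\operatorname{BF}(V)\to\operatorname{BF}(V)$ and $\sigma\in\mathcal A(V)$, $g(\sigma)(v)=[g(v)]_\sigma$; $g$ preserves propositional satisfiability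 if $[g(\phi)]_\sigma=[\phi]_{g(\sigma)}$ always. A formula in $\operatorname{BF}(Y)$ depends on $x_i$ if it contains some $y_j$ with $x_i\in D_j$. A bijection $g$ of $\operatorname{BF}(X\cup Y)$ is admissible w.r.t. $P$ if it preserves propositional satisfiability, $g(x_i)\in\operatorname{BF}(X)$, $g(y_j)\in\operatorname{BF}(Y)$, and if $g(y_j)$ depends on $x_i$ then $g^{-1}(x_i)\in\operatorname{BF}(D_j)$. An admissible group is a subgroup of the group of all admissible functions. For admissible $g$ and $\sigma\in\mathcal A(X)$, $g(\sigma)\in\mathcal A(X)$ is $g(\sigma)(x)=[g(x)]_\sigma$. For $g\in G_{\mathrm{syn}}$ and $s\in\mathcal S(P)$, $g(s)\in\mathcal S(P)$ is the (well-defined) interpretation $t$ with $\sigma_t=g(g^{-1}(\sigma)_s)$ for all $\sigma\in\mathcal A(X)$. *)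

theory Defs
  imports Main
begin

datatype 'v form = Var 'v | Const bool | Neg "'v form"
  | Conj "'v form" "'v form" | Disj "'v form" "'v form"

primrec vars :: "'v form \<Rightarrow> 'v set" where
  "vars (Var v) = {v}"
| "vars (Const b) = {}"
| "vars (Neg p) = vars p"
| "vars (Conj p q) = vars p \<union> vars q"
| "vars (Disj p q) = vars p \<union> vars q"

primrec eval :: "('v \<Rightarrow> bool) \<Rightarrow> 'v form \<Rightarrow> bool" where
  "eval \<sigma> (Var v) = \<sigma> v"
| "eval \<sigma> (Const b) = b"
| "eval \<sigma> (Neg p) = (\<not> eval \<sigma> p)"
| "eval \<sigma> (Conj p q) = (eval \<sigma> p \<and> eval \<sigma> q)"
| "eval \<sigma> (Disj p q) = (eval \<sigma> p \<or> eval \<sigma> q)"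

definition BF :: "'v set \<Rightarrow> 'v form set" where
  "BF V = {\<phi>. vars \<phi> \<subseteq> V}"

definition prefix :: "'v set \<Rightarrow> 'v set \<Rightarrow> ('v \<Rightarrow> 'v set) \<Rightarrow> bool" where
  "prefix X Y D \<longleftrightarrow> finite X \<and> finite Y \<and> X \<inter> Y = {} \<and> (\<forall>y\<in>Y. D y \<subseteq> X)"

text \<open>Interpretations: s y is a Skolem function for y which depends only on the
  values of the universal variables in D y.\<close>
definition interp :: "'v set \<Rightarrow> ('v \<Rightarrow> 'v set) \<Rightarrow> ('v \<Rightarrow> ('v \<Rightarrow> bool) \<Rightarrow> bool) \<Rightarrow> bool" where
  "interp Y D s \<longleftrightarrow>
     (\<forall>y\<in>Y. \<forall>\<sigma> \<sigma>'. (\<forall>x\<in>D y. \<sigma> x = \<sigma>' x) \<longrightarrow> s y \<sigma> = s y \<sigma>')"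

definition ext :: "'v set \<Rightarrow> ('v \<Rightarrow> ('v \<Rightarrow> bool) \<Rightarrow> bool) \<Rightarrow> ('v \<Rightarrow> bool) \<Rightarrow> 'v \<Rightarrow> bool" where
  "ext Y s \<sigma> = (\<lambda>v. if v \<in> Y then s v \<sigma> else \<sigma> v)"

definition dqbf_val :: "'v set \<Rightarrow> ('v \<Rightarrow> ('v \<Rightarrow> bool) \<Rightarrow> bool) \<Rightarrow> 'v form \<Rightarrow> bool" where
  "dqbf_val Y s \<phi> \<longleftrightarrow> (\<forall>\<sigma>. eval (ext Y s \<sigma>) \<phi>)"

definition is_model :: "'v set \<Rightarrow> ('v \<Rightarrow> 'v set) \<Rightarrow> 'v form \<Rightarrow> ('v \<Rightarrow> ('v \<Rightarrow> bool) \<Rightarrow> bool) \<Rightarrow> bool" where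
  "is_model Y D \<phi> s \<longleftrightarrow> interp Y D s \<and> dqbf_val Y s \<phi>"

definition dqbf_true :: "'v set \<Rightarrow> ('v \<Rightarrow> 'v set) \<Rightarrow> 'v form \<Rightarrow> bool" where
  "dqbf_true Y D \<phi> \<longleftrightarrow> (\<exists>s. is_model Y D \<phi> s)"

definition asg :: "('v form \<Rightarrow> 'v form) \<Rightarrow> ('v \<Rightarrow> bool) \<Rightarrow> 'v \<Rightarrow> bool" where
  "asg g \<sigma> = (\<lambda>v. eval \<sigma> (g (Var v)))"

definition preserves_sat :: "'v set \<Rightarrow> ('v form \<Rightarrow> 'v form) \<Rightarrow> bool" where
  "preserves_sat V g \<longleftrightarrow> (\<forall>\<phi>\<in>BF V. \<forall>\<sigma>. eval \<sigma> (g \<phi>) = eval (asg g \<sigma>) \<phi>)"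

definition depends :: "'v set \<Rightarrow> ('v \<Rightarrow> 'v set) \<Rightarrow> 'v form \<Rightarrow> 'v \<Rightarrow> bool" where
  "depends Y D \<psi> x \<longleftrightarrow> (\<exists>y\<in>vars \<psi> \<inter> Y. x \<in> D y)"

definition ginv :: "'v set \<Rightarrow> 'v set \<Rightarrow> ('v form \<Rightarrow> 'v form) \<Rightarrow> 'v form \<Rightarrow> 'v form" where
  "ginv X Y g = inv_into (BF (X \<union> Y)) g"

definition admissible :: "'v set \<Rightarrow> 'v set \<Rightarrow> ('v \<Rightarrow> 'v set) \<Rightarrow> ('v form \<Rightarrow> 'v form) \<Rightarrow> bool" where
  "admissible X Y D g \<longleftrightarrow>
     bij_betw g (BF (X \<union> Y)) (BF (X \<union> Y)) \<and>
     preserves_sat (X \<union> Y) g \<and>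
     (\<forall>x\<in>X. g (Var x) \<in> BF X) \<and>
     (\<forall>y\<in>Y. g (Var y) \<in> BF Y) \<and>
     (\<forall>y\<in>Y. \<forall>x\<in>X. depends Y D (g (Var y)) x \<longrightarrow> ginv X Y g (Var x) \<in> BF (D y))"

text \<open>Maps are total functions on formulas; only their restriction to
  BF(X \<union> Y) matters, so group axioms are stated up to agreement on BF(X \<union> Y).\<close>
definition admissible_group :: "'v set \<Rightarrow> 'v set \<Rightarrow> ('v \<Rightarrow> 'v set) \<Rightarrow> ('v form \<Rightarrow> 'v form) set \<Rightarrow> bool" where
  "admissible_group X Y D G \<longleftrightarrow>
     (\<forall>g\<in>G. admissible X Y D g) \<and>
     (\<exists>e\<in>G. \<forall>\<phi>\<in>BF (X \<union> Y). e \<phi> = \<phi>) \<and>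
     (\<forall>g\<in>G. \<forall>h\<in>G. \<exists>k\<in>G. \<forall>\<phi>\<in>BF (X \<union> Y). k \<phi> = g (h \<phi>)) \<and>
     (\<forall>g\<in>G. \<exists>h\<in>G. \<forall>\<phi>\<in>BF (X \<union> Y). h (g \<phi>) = \<phi> \<and> g (h \<phi>) = \<phi>)"

text \<open>The action g(s): the interpretation t with \<sigma>_t = g(g^{-1}(\<sigma>)_s), i.e.
  t y \<sigma> = [g(y)]_{g^{-1}(\<sigma>)_s}.\<close>
definition act :: "'v set \<Rightarrow> 'v set \<Rightarrow> ('v form \<Rightarrow> 'v form)
    \<Rightarrow> ('v \<Rightarrow> ('v \<Rightarrow> bool) \<Rightarrow> bool) \<Rightarrow> ('v \<Rightarrow> ('v \<Rightarrow> bool) \<Rightarrow> bool)" where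
  "act X Y g s = (\<lambda>y \<sigma>. eval (ext Y s (asg (ginv X Y g) \<sigma>)) (g (Var y)))"

end

theory Submission
  imports Defs
begin

text \<open>Write \<open>g(\<sigma>)\<close> for \<open>asg g \<sigma>\<close> and \<open>\<sigma>_s\<close> for \<open>ext Y s \<sigma>\<close>. For every \<sigma>, the assignments
  \<open>g(\<sigma>_s)\<close> and \<open>g(\<sigma>)_g(s)\<close> agree on \<open>X \<union> Y\<close>: on \<open>X\<close> because \<open>g\<close> maps universal variables to
  formulas over \<open>X\<close>, on \<open>Y\<close> because \<open>g\<^sup>-\<^sup>1(g(\<sigma>)) = \<sigma>\<close> and the Skolem functions of \<open>s\<close> only read
  \<open>X\<close>. As \<open>g\<close> preserves satisfiability, \<open>g(\<phi>)\<close> holds under \<open>\<sigma>_s\<close> iff \<open>\<phi>\<close> holds under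
  \<open>g(\<sigma>)_g(s)\<close>, and as \<open>\<sigma> \<mapsto> g(\<sigma>)\<close> is onto (the group inverse of \<open>g\<close> induces a right inverse),
  quantifying over \<sigma> gives \<open>[P.g(\<phi>)]_s = [P.\<phi>]_g(s)\<close>. The dependency condition on admissible maps
  is exactly what makes \<open>g(s)\<close> again an interpretation.\<close>

lemma eval_cong: "(\<And>v. v \<in> vars \<phi> \<Longrightarrow> \<sigma> v = \<sigma>' v) \<Longrightarrow> eval \<sigma> \<phi> = eval \<sigma>' \<phi>"
  by (induction \<phi>) auto

lemma eval_cong_BF: "\<phi> \<in> BF V \<Longrightarrow> (\<And>v. v \<in> V \<Longrightarrow> \<sigma> v = \<sigma>' v) \<Longrightarrow> eval \<sigma> \<phi> = eval \<sigma>' \<phi>"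
  unfolding BF_def by (rule eval_cong) auto

lemma Var_in_BF_iff [simp]: "Var v \<in> BF V \<longleftrightarrow> v \<in> V"
  unfolding BF_def by simp

lemma preserves_satD: "preserves_sat V g \<Longrightarrow> \<phi> \<in> BF V \<Longrightarrow> eval \<sigma> (g \<phi>) = eval (asg g \<sigma>) \<phi>"
  unfolding preserves_sat_def by blast

lemma asg_asg_inverse:
  assumes "preserves_sat V g" and "h (Var v) \<in> BF V" and "g (h (Var v)) = Var v"
  shows "asg h (asg g \<sigma>) v = \<sigma> v"
proof -
  have "asg h (asg g \<sigma>) v = eval (asg g \<sigma>) (h (Var v))"
    by (simp add: asg_def)
  also have "\<dots> = eval \<sigma> (g (h (Var v)))"
    using preserves_satD[OF assms(1,2)] by simp
  finally show ?thesis
    using assms(3) by simp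
qed

lemma ext_in_Y [simp]: "v \<in> Y \<Longrightarrow> ext Y s \<sigma> v = s v \<sigma>"
  and ext_notin_Y [simp]: "v \<notin> Y \<Longrightarrow> ext Y s \<sigma> v = \<sigma> v"
  by (simp_all add: ext_def)

lemma interpD:
  "interp Y D s \<Longrightarrow> y \<in> Y \<Longrightarrow> (\<And>x. x \<in> D y \<Longrightarrow> \<sigma> x = \<sigma>' x) \<Longrightarrow> s y \<sigma> = s y \<sigma>'"
  unfolding interp_def by blast

lemma eval_ext_cong:
  assumes pre: "prefix X Y D" and s: "interp Y D s" and \<phi>: "\<phi> \<in> BF (X \<union> Y)"
    and agree: "\<And>x. x \<in> X \<Longrightarrow> \<sigma> x = \<sigma>' x"
  shows "eval (ext Y s \<sigma>) \<phi> = eval (ext Y s \<sigma>') \<phi>"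
proof (rule eval_cong_BF[OF \<phi>])
  fix v assume v: "v \<in> X \<union> Y"
  show "ext Y s \<sigma> v = ext Y s \<sigma>' v"
  proof (cases "v \<in> Y")
    case True
    then have "D v \<subseteq> X"
      using pre by (simp add: prefix_def)
    then have "s v \<sigma> = s v \<sigma>'"
      using interpD[OF s True] agree by blast
    with True show ?thesis
      by simp
  next
    case False
    with v agree show ?thesis
      by simp
  qed
qed

lemma
  assumes "admissible X Y D g"
  shows admissible_bij: "bij_betw g (BF (X \<union> Y)) (BF (X \<union> Y))"
    and admissible_preserves_sat: "preserves_sat (X \<union> Y) g"
    and admissible_Var_X: "x \<in> X \<Longrightarrow> g (Var x) \<in> BF X"
    and admissible_Var_Y: "y \<in> Y \<Longrightarrow> g (Var y) \<in> BF Y"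
    and admissible_dependency:
      "y \<in> Y \<Longrightarrow> x \<in> X \<Longrightarrow> depends Y D (g (Var y)) x \<Longrightarrow> ginv X Y g (Var x) \<in> BF (D y)"
  using assms by (simp_all add: admissible_def)

lemma admissible_in_BF:
  "admissible X Y D g \<Longrightarrow> \<phi> \<in> BF (X \<union> Y) \<Longrightarrow> g \<phi> \<in> BF (X \<union> Y)"
  by (rule bij_betw_apply[OF admissible_bij])

lemma asg_ginv_asg:
  assumes adm: "admissible X Y D g" and v: "v \<in> X \<union> Y"
  shows "asg (ginv X Y g) (asg g \<sigma>) v = \<sigma> v"
proof (rule asg_asg_inverse)
  note bij = admissible_bij[OF adm]
  show "preserves_sat (X \<union> Y) g"
    by (rule admissible_preserves_sat[OF adm])
  show "ginv X Y g (Var v) \<in> BF (X \<union> Y)"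
    using bij_betw_apply[OF bij_betw_inv_into[OF bij]] v unfolding ginv_def by simp
  show "g (ginv X Y g (Var v)) = Var v"
    using bij_betw_inv_into_right[OF bij] v unfolding ginv_def by simp
qed

lemma asg_ext_eq_ext_act:
  assumes pre: "prefix X Y D" and adm: "admissible X Y D g" and s: "interp Y D s"
    and v: "v \<in> X \<union> Y"
  shows "asg g (ext Y s \<sigma>) v = ext Y (act X Y g s) (asg g \<sigma>) v"
proof (cases "v \<in> Y")
  case True
  have "g (Var v) \<in> BF (X \<union> Y)"
    by (rule admissible_in_BF[OF adm]) (use v in simp)
  then have "eval (ext Y s \<sigma>) (g (Var v))
      = eval (ext Y s (asg (ginv X Y g) (asg g \<sigma>))) (g (Var v))"
    by (rule eval_ext_cong[OF pre s]) (use asg_ginv_asg[OF adm] in simp)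
  with True show ?thesis
    by (simp add: asg_def act_def)
next
  case False
  with v have "g (Var v) \<in> BF X"
    using admissible_Var_X[OF adm] by simp
  moreover have "ext Y s \<sigma> x = \<sigma> x" if "x \<in> X" for x
  proof -
    have "x \<notin> Y"
      using pre that unfolding prefix_def by blast
    then show ?thesis
      by simp
  qed
  ultimately have "eval (ext Y s \<sigma>) (g (Var v)) = eval \<sigma> (g (Var v))"
    by (rule eval_cong_BF)
  with False show ?thesis
    by (simp add: asg_def)
qed

lemma dqbf_val_image_iff:
  assumes pre: "prefix X Y D" and adm: "admissible X Y D g" and s: "interp Y D s"
    and \<phi>: "\<phi> \<in> BF (X \<union> Y)"
  shows "dqbf_val Y s (g \<phi>) \<longleftrightarrow> (\<forall>\<sigma>. eval (ext Y (act X Y g s) (asg g \<sigma>)) \<phi>)"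
proof -
  have "eval (ext Y s \<sigma>) (g \<phi>) = eval (ext Y (act X Y g s) (asg g \<sigma>)) \<phi>" for \<sigma>
  proof -
    have "eval (ext Y s \<sigma>) (g \<phi>) = eval (asg g (ext Y s \<sigma>)) \<phi>"
      by (rule preserves_satD[OF admissible_preserves_sat[OF adm] \<phi>])
    also have "\<dots> = eval (ext Y (act X Y g s) (asg g \<sigma>)) \<phi>"
      by (rule eval_cong_BF[OF \<phi> asg_ext_eq_ext_act[OF pre adm s]])
    finally show ?thesis .
  qed
  then show ?thesis
    unfolding dqbf_val_def by simp
qed

lemma interp_act:
  assumes pre: "prefix X Y D" and adm: "admissible X Y D g" and s: "interp Y D s"
  shows "interp Y D (act X Y g s)"
  unfolding interp_def
proof (intro ballI allI impI)
  fix y and \<sigma> \<sigma>' :: "'a \<Rightarrow> bool"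
  assume y: "y \<in> Y" and agree: "\<forall>x\<in>D y. \<sigma> x = \<sigma>' x"
  let ?gi = "ginv X Y g"
  have "ext Y s (asg ?gi \<sigma>) w = ext Y s (asg ?gi \<sigma>') w" if w: "w \<in> vars (g (Var y))" for w
  proof -
    have wY: "w \<in> Y"
      using admissible_Var_Y[OF adm y] w unfolding BF_def by blast
    have "asg ?gi \<sigma> x = asg ?gi \<sigma>' x" if x: "x \<in> D w" for x
    proof -
      have "x \<in> X"
        using pre wY x unfolding prefix_def by blast
      moreover have "depends Y D (g (Var y)) x"
        unfolding depends_def using w wY x by blast
      ultimately have "?gi (Var x) \<in> BF (D y)"
        by (rule admissible_dependency[OF adm y])
      then show ?thesis
        unfolding asg_def by (rule eval_cong_BF) (use agree in blast)
    qed
    then have "s w (asg ?gi \<sigma>) = s w (asg ?gi \<sigma>')"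
      by (rule interpD[OF s wY])
    with wY show ?thesis
      by simp
  qed
  then have "eval (ext Y s (asg ?gi \<sigma>)) (g (Var y)) = eval (ext Y s (asg ?gi \<sigma>')) (g (Var y))"
    by (rule eval_cong)
  then show "act X Y g s y \<sigma> = act X Y g s y \<sigma>'"
    by (simp add: act_def)
qed

lemma dqbf_val_admissible:
  assumes pre: "prefix X Y D" and adm: "admissible X Y D g"
    and sat_h: "preserves_sat (X \<union> Y) h" and left: "\<forall>\<psi>\<in>BF (X \<union> Y). h (g \<psi>) = \<psi>"
    and s: "interp Y D s" and \<phi>: "\<phi> \<in> BF (X \<union> Y)"
  shows "dqbf_val Y s (g \<phi>) \<longleftrightarrow> dqbf_val Y (act X Y g s) \<phi>"
proof -
  have onto: "eval (ext Y (act X Y g s) \<tau>) \<phi> = eval (ext Y (act X Y g s) (asg g (asg h \<tau>))) \<phi>"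
    for \<tau>
  proof (rule eval_ext_cong[OF pre interp_act[OF pre adm s] \<phi>])
    fix x assume x: "x \<in> X"
    then have "g (Var x) \<in> BF (X \<union> Y)"
      by (intro admissible_in_BF[OF adm]) simp
    with left x have "asg g (asg h \<tau>) x = \<tau> x"
      by (intro asg_asg_inverse[OF sat_h]) auto
    then show "\<tau> x = asg g (asg h \<tau>) x"
      by simp
  qed
  show ?thesis
  proof
    assume "dqbf_val Y s (g \<phi>)"
    then have image: "\<forall>\<sigma>. eval (ext Y (act X Y g s) (asg g \<sigma>)) \<phi>"
      using dqbf_val_image_iff[OF pre adm s \<phi>] by blast
    show "dqbf_val Y (act X Y g s) \<phi>"
      unfolding dqbf_val_def
    proof
      fix \<tau>
      show "eval (ext Y (act X Y g s) \<tau>) \<phi>"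
        using image onto[of \<tau>] by simp
    qed
  next
    assume "dqbf_val Y (act X Y g s) \<phi>"
    then show "dqbf_val Y s (g \<phi>)"
      unfolding dqbf_val_image_iff[OF pre adm s \<phi>] by (simp add: dqbf_val_def)
  qed
qed

lemma is_model_admissible:
  assumes "prefix X Y D" and "admissible X Y D g"
    and "preserves_sat (X \<union> Y) h" and "\<forall>\<psi>\<in>BF (X \<union> Y). h (g \<psi>) = \<psi>"
    and "interp Y D s" and "\<phi> \<in> BF (X \<union> Y)"
  shows "is_model Y D (g \<phi>) s \<longleftrightarrow> is_model Y D \<phi> (act X Y g s)"
  using dqbf_val_admissible[OF assms] interp_act[OF assms(1,2,5)] assms(5)
  unfolding is_model_def by blast

lemma dqbf_true_admissible:
  assumes pre: "prefix X Y D" and adm_g: "admissible X Y D g" and adm_h: "admissible X Y D h"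
    and left: "\<forall>\<psi>\<in>BF (X \<union> Y). h (g \<psi>) = \<psi>" and right: "\<forall>\<psi>\<in>BF (X \<union> Y). g (h \<psi>) = \<psi>"
    and \<phi>: "\<phi> \<in> BF (X \<union> Y)"
  shows "dqbf_true Y D \<phi> \<longleftrightarrow> dqbf_true Y D (g \<phi>)"
proof
  assume "dqbf_true Y D \<phi>"
  moreover have "h (g \<phi>) = \<phi>"
    using left \<phi> by blast
  ultimately obtain s where model: "is_model Y D (h (g \<phi>)) s"
    unfolding dqbf_true_def by auto
  then have "interp Y D s"
    by (simp add: is_model_def)
  with model have "is_model Y D (g \<phi>) (act X Y h s)"
    using is_model_admissible[OF pre adm_h admissible_preserves_sat[OF adm_g] right _
        admissible_in_BF[OF adm_g \<phi>]]
    by simp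
  then show "dqbf_true Y D (g \<phi>)"
    unfolding dqbf_true_def by blast
next
  assume "dqbf_true Y D (g \<phi>)"
  then obtain s where model: "is_model Y D (g \<phi>) s"
    unfolding dqbf_true_def by blast
  then have "interp Y D s"
    by (simp add: is_model_def)
  with model have "is_model Y D \<phi> (act X Y g s)"
    using is_model_admissible[OF pre adm_g admissible_preserves_sat[OF adm_h] left _ \<phi>] by simp
  then show "dqbf_true Y D \<phi>"
    unfolding dqbf_true_def by blast
qed

lemma admissible_group_inverse:
  assumes "admissible_group X Y D G" and "g \<in> G"
  obtains h where "admissible X Y D g" and "admissible X Y D h"
    and "\<forall>\<psi>\<in>BF (X \<union> Y). h (g \<psi>) = \<psi>" and "\<forall>\<psi>\<in>BF (X \<union> Y). g (h \<psi>) = \<psi>"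
proof -
  have "\<forall>g\<in>G. admissible X Y D g"
    and "\<forall>g\<in>G. \<exists>h\<in>G. \<forall>\<psi>\<in>BF (X \<union> Y). h (g \<psi>) = \<psi> \<and> g (h \<psi>) = \<psi>"
    using assms(1) by (simp_all add: admissible_group_def)
  with assms(2) show thesis
    using that by blast
qed

theorem proposition1:
  fixes X Y :: "'v set" and D :: "'v \<Rightarrow> 'v set" and \<phi> :: "'v form"
    and G :: "('v form \<Rightarrow> 'v form) set"
  assumes "prefix X Y D"
    and "\<phi> \<in> BF (X \<union> Y)"
    and "admissible_group X Y D G"
  shows "(\<forall>g\<in>G. \<forall>s. interp Y D s \<longrightarrow>
            dqbf_val Y s (g \<phi>) = dqbf_val Y (act X Y g s) \<phi>)
         \<and> (\<forall>g\<in>G. dqbf_true Y D \<phi> \<longleftrightarrow> dqbf_true Y D (g \<phi>))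
         \<and> (\<forall>g\<in>G. \<forall>s. interp Y D s \<longrightarrow>
            (is_model Y D (g \<phi>) s \<longleftrightarrow> is_model Y D \<phi> (act X Y g s)))"
proof (intro conjI ballI allI impI)
  fix g assume "g \<in> G"
  then obtain h where adm_g: "admissible X Y D g" and adm_h: "admissible X Y D h"
    and left: "\<forall>\<psi>\<in>BF (X \<union> Y). h (g \<psi>) = \<psi>" and right: "\<forall>\<psi>\<in>BF (X \<union> Y). g (h \<psi>) = \<psi>"
    by (rule admissible_group_inverse[OF assms(3)])
  note sat_h = admissible_preserves_sat[OF adm_h]
  show "dqbf_val Y s (g \<phi>) = dqbf_val Y (act X Y g s) \<phi>" if "interp Y D s" for s
    by (rule dqbf_val_admissible[OF assms(1) adm_g sat_h left that assms(2)])
  show "is_model Y D (g \<phi>) s \<longleftrightarrow> is_model Y D \<phi> (act X Y g s)" if "interp Y D s" for s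
    by (rule is_model_admissible[OF assms(1) adm_g sat_h left that assms(2)])
  show "dqbf_true Y D \<phi> \<longleftrightarrow> dqbf_true Y D (g \<phi>)"
    by (rule dqbf_true_admissible[OF assms(1) adm_g adm_h left right assms(2)])
qed

end
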